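(* Assume Schanuel's conjecture $(S)$. Let $z$ and $w$ be complex numbers with $z,w\notin\{0,1\}$. If $z^{w}$ and $w^{z}$ are both algebraic, then either $z$ and $w$ are both rational, or $z$ and $w$ are both transcendental. In particular, assuming $(S)$: if $r,s,t$ are real numbers with $1<s<t$ and $s^{t}=t^{s}=r$, and if either (i) $r\in\mathbb{N}$ and $r\neq 16$, or (ii) $r^n$ is algebraic but irrational for every $n\in\mathbb{N}$, then $s$ and $t$ are both transcendental.
   Context: Schanuel's conjecture $(S)$: if $\alpha_1,\dots,\alpha_n\in\mathbb{C}$ are linearly independent over $\mathbb{Q}$, then the transcendence degree of $\mathbb{Q}(\alpha_1,\dots,\alpha_n,e^{\alpha_1},\dots,e^{\alpha_n})$ over $\mathbb{Q}$ is at least $n$. For complex $a\neq 0$ and $b$, the power $a^{b}$ means $e^{b\log a}$ for a fixed determination of the logarithm $\log a$ (for positive reals, the real logarithm). *)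

theory Defs
  imports Complex_Main "HOL-Computational_Algebra.Polynomial"
begin

definition Q_lin_indep :: "nat \<Rightarrow> (nat \<Rightarrow> complex) \<Rightarrow> bool" where
  "Q_lin_indep n a \<longleftrightarrow>
     (\<forall>c :: nat \<Rightarrow> rat. (\<Sum>i<n. of_rat (c i) * a i) = 0 \<longrightarrow> (\<forall>i<n. c i = 0))"

text \<open>A polynomial is a finite set M of exponent vectors (supported in the first n variables)
  with coefficients c.\<close>
definition Q_alg_indep :: "nat \<Rightarrow> (nat \<Rightarrow> complex) \<Rightarrow> bool" where
  "Q_alg_indep n x \<longleftrightarrow>
     (\<forall>(M :: (nat \<Rightarrow> nat) set) (c :: (nat \<Rightarrow> nat) \<Rightarrow> rat).
        finite M \<longrightarrow> (\<forall>m\<in>M. \<forall>i\<ge>n. m i = 0) \<longrightarrow>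
        (\<Sum>m\<in>M. of_rat (c m) * (\<Prod>i<n. x i ^ m i)) = 0 \<longrightarrow> (\<forall>m\<in>M. c m = 0))"

definition is_subfield :: "complex set \<Rightarrow> bool" where
  "is_subfield F \<longleftrightarrow> 0 \<in> F \<and> 1 \<in> F \<and> (\<forall>x\<in>F. \<forall>y\<in>F. x + y \<in> F \<and> x * y \<in> F)
     \<and> (\<forall>x\<in>F. - x \<in> F \<and> inverse x \<in> F)"

definition gen_field :: "complex set \<Rightarrow> complex set" where
  "gen_field S = \<Inter>{F. is_subfield F \<and> S \<subseteq> F}"

definition trdeg_ge :: "complex set \<Rightarrow> nat \<Rightarrow> bool" where
  "trdeg_ge S n \<longleftrightarrow> (\<exists>x. (\<forall>i<n. x i \<in> gen_field S) \<and> Q_alg_indep n x)"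

definition Schanuel :: bool where
  "Schanuel \<longleftrightarrow> (\<forall>n (a :: nat \<Rightarrow> complex). Q_lin_indep n a \<longrightarrow>
      trdeg_ge (a ` {..<n} \<union> (\<lambda>i. exp (a i)) ` {..<n}) n)"

end

theory Submission
  imports Defs "HOL-Library.FuncSet"
begin

(* The only consequence of Schanuel's conjecture used is the contrapositive shape
   "linearly independent a_0..a_m whose values and exponentials all lie in
   Q(t_0, ..., t_(m-1), A) with A a finite set of algebraic numbers cannot exist"
   (schanuel_contradiction).  It rests on a transcendence degree bound
   (trdeg_upper_bound): such a field contains no m+1 algebraically independent
   elements.  That bound is proved by counting: every element of the field is a
   quotient of "polynomials" in the t_i with coefficients in a finite-dimensional
   Q-algebra spanned by the algebraic numbers, and there are more monomials of
   bounded degree in m+1 elements than the dimension of the space of such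
   polynomials of the corresponding degree, so a nontrivial rational relation
   must exist.
   The first part of the theorem then follows by the case analysis of the paper
   (z, w both algebraic / one algebraic and rational / one algebraic and
   irrational), each case producing logarithms that violate the bound.  The second
   part specialises to real s, t > 1 with s^t = t^s: rational s, t are excluded by
   the hypotheses on r, using that s^t = t^s with integral s forces (s, t) = (2, 4). *)


subsection \<open>Linear algebra over the rationals\<close>

lemma rat_homogeneous_system:
  fixes l :: "'i \<Rightarrow> 'j \<Rightarrow> rat"
  assumes "finite J" "finite I" "card J < card I"
  shows "\<exists>c. (\<exists>i\<in>I. c i \<noteq> 0) \<and> (\<forall>j\<in>J. (\<Sum>i\<in>I. c i * l i j) = 0)"
  using assms
proof (induction J arbitrary: I l rule: finite_induct)
  case empty
  then have "I \<noteq> {}" by auto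
  then show ?case by (intro exI[of _ "\<lambda>_. 1"]) auto
next
  case (insert j0 J)
  show ?case
  proof (cases "\<forall>i\<in>I. l i j0 = 0")
    case True
    from insert have "card J < card I" by simp
    from insert.IH[OF insert.prems(1) this, of l] obtain c where
      c: "\<exists>i\<in>I. c i \<noteq> 0" "\<forall>j\<in>J. (\<Sum>i\<in>I. c i * l i j) = 0" by blast
    show ?thesis using c True by (intro exI[of _ c]) auto
  next
    case False
    then obtain i0 where i0: "i0 \<in> I" "l i0 j0 \<noteq> 0" by blast
    define I' where "I' = I - {i0}"
    have fI': "finite I'" using insert by (simp add: I'_def)
    have cI': "card J < card I'" using insert i0 by (simp add: I'_def)
    define l' where "l' i j = l i j - l i j0 / l i0 j0 * l i0 j" for i j
    from insert.IH[OF fI' cI', of l'] obtain c' where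
      c': "\<exists>i\<in>I'. c' i \<noteq> 0" "\<forall>j\<in>J. (\<Sum>i\<in>I'. c' i * l' i j) = 0" by blast
    define s where "s = (\<Sum>i\<in>I'. c' i * l i j0)"
    define c where "c = c'(i0 := - s / l i0 j0)"
    have i0I': "i0 \<notin> I'" by (simp add: I'_def)
    have sp: "(\<Sum>i\<in>I. c i * l i j) = c i0 * l i0 j + (\<Sum>i\<in>I'. c' i * l i j)" for j
    proof -
      have "(\<Sum>i\<in>I. c i * l i j) = c i0 * l i0 j + (\<Sum>i\<in>I'. c i * l i j)"
        using insert(4) i0 by (simp add: I'_def sum.remove)
      also have "(\<Sum>i\<in>I'. c i * l i j) = (\<Sum>i\<in>I'. c' i * l i j)"
        using i0I' by (intro sum.cong) (auto simp: c_def)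
      finally show ?thesis .
    qed
    have "\<exists>i\<in>I. c i \<noteq> 0" using c'(1) i0I' by (auto simp: c_def I'_def)
    moreover have "(\<Sum>i\<in>I. c i * l i j) = 0" if j: "j \<in> insert j0 J" for j
    proof (cases "j = j0")
      case True
      then show ?thesis using i0 unfolding sp True by (simp add: c_def s_def)
    next
      case False
      with j have jJ: "j \<in> J" by auto
      have "(\<Sum>i\<in>I'. c' i * l i j) = (\<Sum>i\<in>I'. c' i * l' i j + c' i * l i j0 * (l i0 j / l i0 j0))"
        by (intro sum.cong) (auto simp: l'_def algebra_simps)
      also have "\<dots> = s * (l i0 j / l i0 j0)"
        using c'(2) jJ by (simp add: sum.distrib s_def sum_distrib_right sum_divide_distrib)
      finally show ?thesis using i0 unfolding sp by (simp add: c_def field_simps)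
    qed
    ultimately show ?thesis by blast
  qed
qed

definition qspan :: "complex set \<Rightarrow> complex set" where
  "qspan Y = {v. \<exists>c. v = (\<Sum>y\<in>Y. of_rat (c y) * y)}"

lemma qspan_0: "0 \<in> qspan Y"
  unfolding qspan_def by (rule CollectI, rule exI[of _ "\<lambda>_. 0"]) simp

lemma qspan_add: "u \<in> qspan Y \<Longrightarrow> v \<in> qspan Y \<Longrightarrow> u + v \<in> qspan Y"
  unfolding qspan_def
proof clarify
  fix c d
  show "\<exists>e. (\<Sum>y\<in>Y. of_rat (c y) * y) + (\<Sum>y\<in>Y. of_rat (d y) * y) = (\<Sum>y\<in>Y. of_rat (e y) * y)"
    by (rule exI[of _ "\<lambda>y. c y + d y"]) (simp add: sum.distrib of_rat_add distrib_right)
qed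

lemma qspan_scale: "u \<in> qspan Y \<Longrightarrow> of_rat r * u \<in> qspan Y"
  unfolding qspan_def
proof clarify
  fix c
  show "\<exists>e. of_rat r * (\<Sum>y\<in>Y. of_rat (c y) * y) = (\<Sum>y\<in>Y. of_rat (e y) * y)"
    by (rule exI[of _ "\<lambda>y. r * c y"]) (simp add: sum_distrib_left of_rat_mult mult.assoc)
qed

lemma qspan_neg: "u \<in> qspan Y \<Longrightarrow> - u \<in> qspan Y"
  using qspan_scale[of u Y "-1"] by (simp add: of_rat_minus)

lemma qspan_gen: assumes "finite Y" "y \<in> Y" shows "y \<in> qspan Y"
  unfolding qspan_def
proof (rule CollectI, rule exI[of _ "\<lambda>x. if x = y then 1 else 0"])
  have "(\<Sum>x\<in>Y. of_rat (if x = y then 1 else 0) * x) = (\<Sum>x\<in>Y. if x = y then x else 0)"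
    by (intro sum.cong) auto
  also have "\<dots> = y" using assms by simp
  finally show "y = (\<Sum>x\<in>Y. of_rat (if x = y then 1 else 0) * x)" by simp
qed

lemma qspan_sum: "finite I \<Longrightarrow> (\<And>i. i \<in> I \<Longrightarrow> f i \<in> qspan Y) \<Longrightarrow> sum f I \<in> qspan Y"
  by (induction I rule: finite_induct) (auto intro: qspan_add qspan_0)

lemma qspan_comb:
  assumes "finite I" shows "(\<Sum>i\<in>I. of_rat (r i) * g i) \<in> qspan (g ` I)"
  using assms by (intro qspan_sum qspan_scale qspan_gen) auto

lemma qspan_trans: assumes "X \<subseteq> qspan Y" "finite X" shows "qspan X \<subseteq> qspan Y"
proof
  fix v assume "v \<in> qspan X"
  then obtain c where v: "v = (\<Sum>x\<in>X. of_rat (c x) * x)" by (auto simp: qspan_def)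
  show "v \<in> qspan Y" unfolding v using assms by (intro qspan_sum qspan_scale) auto
qed

lemma qspan_mono: "X \<subseteq> Y \<Longrightarrow> finite Y \<Longrightarrow> qspan X \<subseteq> qspan Y"
  using qspan_trans[of X Y] qspan_gen[of Y] finite_subset[of X Y] by blast

lemma qspan_mult:
  assumes "\<And>x y. x \<in> X \<Longrightarrow> y \<in> Y \<Longrightarrow> x * y \<in> qspan Z" "finite X" "finite Y"
    "u \<in> qspan X" "v \<in> qspan Y"
  shows "u * v \<in> qspan Z"
proof -
  obtain c where u: "u = (\<Sum>x\<in>X. of_rat (c x) * x)" using assms(4) by (auto simp: qspan_def)
  obtain d where v: "v = (\<Sum>y\<in>Y. of_rat (d y) * y)" using assms(5) by (auto simp: qspan_def)
  have "u * v = (\<Sum>x\<in>X. \<Sum>y\<in>Y. of_rat (c x) * (of_rat (d y) * (x * y)))"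
    unfolding u v sum_product by (intro sum.cong refl) (simp add: algebra_simps)
  also have "\<dots> \<in> qspan Z" using assms by (intro qspan_sum qspan_scale) auto
  finally show ?thesis .
qed

lemma qspan_dependent:
  assumes "finite I" "finite J" "card J < card I" "\<And>e. e \<in> I \<Longrightarrow> f e \<in> qspan J"
  shows "\<exists>g. (\<exists>e\<in>I. g e \<noteq> 0) \<and> (\<Sum>e\<in>I. of_rat (g e) * f e) = 0"
proof -
  have "\<forall>e\<in>I. \<exists>c. f e = (\<Sum>j\<in>J. of_rat (c j) * j)"
    using assms(4) unfolding qspan_def by blast
  then obtain lam where lam: "\<And>e. e \<in> I \<Longrightarrow> f e = (\<Sum>j\<in>J. of_rat (lam e j) * j)" by metis
  obtain g where g: "\<exists>e\<in>I. g e \<noteq> 0" "\<And>j. j \<in> J \<Longrightarrow> (\<Sum>e\<in>I. g e * lam e j) = 0"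
    using rat_homogeneous_system[OF assms(2,1,3), of lam] by blast
  have "(\<Sum>e\<in>I. of_rat (g e) * f e) = (\<Sum>e\<in>I. \<Sum>j\<in>J. of_rat (g e * lam e j) * j)"
    using lam by (simp add: sum_distrib_left of_rat_mult mult.assoc)
  also have "\<dots> = (\<Sum>j\<in>J. of_rat (\<Sum>e\<in>I. g e * lam e j) * j)"
    by (subst sum.swap) (simp add: of_rat_sum sum_distrib_right)
  also have "\<dots> = 0" using g(2) by simp
  finally show ?thesis using g(1) by blast
qed


subsection \<open>Algebraic numbers span finite-dimensional algebras\<close>

lemma algebraic_power_relation:
  assumes "algebraic (a::complex)"
  shows "\<exists>k\<ge>1. a ^ k \<in> qspan ((\<lambda>i. a ^ i) ` {..<k})"
proof -
  obtain p where p: "\<And>i. coeff p i \<in> \<rat>" "p \<noteq> 0" "poly p a = 0"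
    using assms unfolding algebraic_altdef by blast
  define k where "k = degree p"
  have k1: "k \<ge> 1"
  proof (rule ccontr)
    assume "\<not> k \<ge> 1"
    then have "degree p = 0" by (simp add: k_def)
    then obtain c where "p = [:c:]" by (meson degree_eq_zeroE)
    with p show False by auto
  qed
  have lc: "coeff p k \<noteq> 0" using p(2) by (simp add: k_def)
  have "0 = (\<Sum>i\<le>k. coeff p i * a ^ i)" using p(3) by (simp add: poly_altdef k_def)
  also have "\<dots> = (\<Sum>i<k. coeff p i * a ^ i) + coeff p k * a ^ k"
    by (simp add: lessThan_Suc_atMost[symmetric])
  finally have "0 = (\<Sum>i<k. coeff p i * a ^ i) + coeff p k * a ^ k" .
  then have h: "coeff p k * a ^ k = - (\<Sum>i<k. coeff p i * a ^ i)"
    by (simp add: eq_neg_iff_add_eq_0 add.commute)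
  have eq: "a ^ k = (\<Sum>i<k. (- coeff p i / coeff p k) * a ^ i)"
  proof -
    have "a ^ k = (- (\<Sum>i<k. coeff p i * a ^ i)) / coeff p k" using h lc
      by (metis nonzero_mult_div_cancel_left)
    also have "\<dots> = (\<Sum>i<k. (- (coeff p i * a ^ i)) / coeff p k)"
      by (simp add: sum_divide_distrib[symmetric] sum_negf)
    also have "\<dots> = (\<Sum>i<k. (- coeff p i / coeff p k) * a ^ i)"
      by (intro sum.cong) auto
    finally show ?thesis .
  qed
  have "\<forall>i. \<exists>r. of_rat r = - coeff p i / coeff p k"
  proof
    fix i
    have "- coeff p i / coeff p k \<in> \<rat>" using p(1) by (intro Rats_divide Rats_minus_iff[THEN iffD2]) auto
    then show "\<exists>r. of_rat r = - coeff p i / coeff p k" unfolding Rats_def by (metis rangeE)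
  qed
  then obtain r where r: "\<And>i. of_rat (r i) = - coeff p i / coeff p k" by metis
  have "a ^ k = (\<Sum>i<k. of_rat (r i) * a ^ i)" unfolding eq r ..
  also have "\<dots> \<in> qspan ((\<lambda>i. a ^ i) ` {..<k})" by (rule qspan_comb) simp
  finally show ?thesis using k1 by blast
qed

lemma algebraic_powers_span:
  assumes "algebraic (a::complex)"
  shows "\<exists>P. finite P \<and> (\<forall>n. a ^ n \<in> qspan P) \<and> (\<forall>x\<in>P. \<exists>i. x = a ^ i)"
proof -
  obtain k where k: "k \<ge> 1" "a ^ k \<in> qspan ((\<lambda>i. a ^ i) ` {..<k})"
    using algebraic_power_relation[OF assms] by blast
  define P where "P = (\<lambda>i. a ^ i) ` {..<k}"
  have fP: "finite P" by (simp add: P_def)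
  have step: "a * x \<in> qspan P" if "x \<in> qspan P" for x
  proof (rule qspan_mult[of "{a}" P])
    fix x y assume "x \<in> {a}" "y \<in> P"
    then obtain i where i: "i < k" "x * y = a ^ Suc i" by (auto simp: P_def)
    show "x * y \<in> qspan P"
    proof (cases "Suc i < k")
      case True
      then have "a ^ Suc i \<in> P" unfolding P_def by blast
      then show ?thesis using i fP qspan_gen by auto
    next
      case False then have "Suc i = k" using i by simp
      then show ?thesis using i k by (simp add: P_def)
    qed
  qed (use that fP in \<open>auto intro: qspan_gen\<close>)
  have "a ^ n \<in> qspan P" for n
  proof (induction n)
    case 0 then show ?case using k fP by (auto simp: P_def intro!: qspan_gen image_eqI[of 1 _ 0])
  next
    case (Suc n) then show ?case using step by simp
  qed
  then show ?thesis using fP by (auto simp: P_def)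
qed

lemma algebraic_span_algebra:
  assumes "finite A" "\<forall>a\<in>A. algebraic (a::complex)"
  shows "\<exists>B. finite B \<and> 1 \<in> qspan B \<and> A \<subseteq> qspan B \<and> (\<forall>b\<in>B. \<forall>b'\<in>B. b * b' \<in> qspan B)"
  using assms
proof (induction A rule: finite_induct)
  case empty
  show ?case by (rule exI[of _ "{1}"]) (auto intro: qspan_gen)
next
  case (insert a F)
  then obtain B where B: "finite B" "1 \<in> qspan B" "F \<subseteq> qspan B" "\<forall>b\<in>B. \<forall>b'\<in>B. b * b' \<in> qspan B"
    by auto
  obtain P where P: "finite P" "\<And>n. a ^ n \<in> qspan P" "\<And>x. x \<in> P \<Longrightarrow> \<exists>i. x = a ^ i"
    using algebraic_powers_span insert by (metis insertCI)
  define B' where "B' = (\<lambda>(b,p). b * p) ` (B \<times> P)"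
  have fB': "finite B'" using B P by (simp add: B'_def)
  have key: "u * v \<in> qspan B'" if "u \<in> qspan B" "v \<in> qspan P" for u v
  proof (rule qspan_mult[OF _ B(1) P(1) that])
    fix x y assume "x \<in> B" "y \<in> P"
    then have "x * y \<in> B'" unfolding B'_def by (auto intro: rev_image_eqI[of "(x,y)"])
    then show "x * y \<in> qspan B'" using fB' qspan_gen by blast
  qed
  have 1: "1 \<in> qspan B'" using key[OF B(2) P(2)[of 0]] by simp
  have "insert a F \<subseteq> qspan B'"
    using key[OF B(2) P(2)[of 1]] key[OF _ P(2)[of 0]] B(3) by auto
  moreover have "\<forall>x\<in>B'. \<forall>y\<in>B'. x * y \<in> qspan B'"
  proof (intro ballI)
    fix x y assume "x \<in> B'" "y \<in> B'"
    then obtain b p b' p' where bp: "b \<in> B" "p \<in> P" "b' \<in> B" "p' \<in> P" "x = b * p" "y = b' * p'"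
      by (auto simp: B'_def)
    obtain i j where ij: "p = a ^ i" "p' = a ^ j" using P(3)[OF bp(2)] P(3)[OF bp(4)] by blast
    have "p * p' = a ^ (i + j)" by (simp add: ij power_add)
    then have "p * p' \<in> qspan P" using P(2) by simp
    have "x * y = (b * b') * (p * p')" using bp by (simp add: algebra_simps)
    also have "\<dots> \<in> qspan B'" using key B(4) bp \<open>p * p' \<in> qspan P\<close> by auto
    finally show "x * y \<in> qspan B'" .
  qed
  ultimately show ?case using fB' 1 by blast
qed


lemma gen_field_least: "is_subfield F \<Longrightarrow> S \<subseteq> F \<Longrightarrow> gen_field S \<subseteq> F"
  unfolding gen_field_def by blast

lemma gen_field_gen: "x \<in> S \<Longrightarrow> x \<in> gen_field S"
  unfolding gen_field_def by blast

lemma gen_field_subfield: "is_subfield (gen_field S)"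
  unfolding is_subfield_def gen_field_def by auto

lemma gen_field_0: "0 \<in> gen_field S" and gen_field_1: "1 \<in> gen_field S"
  using gen_field_subfield[of S] unfolding is_subfield_def by auto

lemma gen_field_add: "x \<in> gen_field S \<Longrightarrow> y \<in> gen_field S \<Longrightarrow> x + y \<in> gen_field S"
  and gen_field_mult: "x \<in> gen_field S \<Longrightarrow> y \<in> gen_field S \<Longrightarrow> x * y \<in> gen_field S"
  and gen_field_neg: "x \<in> gen_field S \<Longrightarrow> - x \<in> gen_field S"
  and gen_field_inverse: "x \<in> gen_field S \<Longrightarrow> inverse x \<in> gen_field S"
  using gen_field_subfield[of S] unfolding is_subfield_def by auto

lemma gen_field_diff: "x \<in> gen_field S \<Longrightarrow> y \<in> gen_field S \<Longrightarrow> x - y \<in> gen_field S"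
  unfolding diff_conv_add_uminus by (intro gen_field_add gen_field_neg)

lemma gen_field_divide: "x \<in> gen_field S \<Longrightarrow> y \<in> gen_field S \<Longrightarrow> x / y \<in> gen_field S"
  unfolding divide_inverse by (intro gen_field_mult gen_field_inverse)

lemma gen_field_power: "x \<in> gen_field S \<Longrightarrow> x ^ n \<in> gen_field S"
  by (induction n) (auto intro: gen_field_mult gen_field_1)

lemma gen_field_of_nat: "of_nat n \<in> gen_field S"
  by (induction n) (auto intro: gen_field_add gen_field_1 gen_field_0)

lemma gen_field_of_int: "of_int n \<in> gen_field S"
proof (cases "n \<ge> 0")
  case True then show ?thesis using gen_field_of_nat[of "nat n" S] by simp
next
  case False then show ?thesis using gen_field_neg[OF gen_field_of_nat[of "nat (-n)" S]] by simp
qed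

lemma gen_field_of_rat: "of_rat r \<in> gen_field S"
proof -
  obtain a b where "r = Fract a b" by (cases r) auto
  then have "of_rat r = (of_int a / of_int b :: complex)"
    by (simp add: Fract_of_int_quotient of_rat_divide)
  then show ?thesis by (simp add: gen_field_divide gen_field_of_int)
qed


definition exps :: "nat \<Rightarrow> nat \<Rightarrow> (nat \<Rightarrow> nat) set" where
  "exps n D = {e. (\<forall>i. i \<ge> n \<longrightarrow> e i = 0) \<and> (\<forall>i<n. e i \<le> D)}"

lemma exps_image: "exps n D = (\<lambda>f i. if i < n then f i else 0) ` (PiE {..<n} (\<lambda>_. {..D}))"
proof
  show "exps n D \<subseteq> (\<lambda>f i. if i < n then f i else 0) ` (PiE {..<n} (\<lambda>_. {..D}))"
  proof
    fix e assume e: "e \<in> exps n D"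
    have "e = (\<lambda>i. if i < n then restrict e {..<n} i else 0)"
      using e by (auto simp: exps_def)
    moreover have "restrict e {..<n} \<in> PiE {..<n} (\<lambda>_. {..D})" using e by (auto simp: exps_def)
    ultimately show "e \<in> (\<lambda>f i. if i < n then f i else 0) ` (PiE {..<n} (\<lambda>_. {..D}))" by blast
  qed
qed (auto simp: exps_def PiE_def)

lemma exps_inj: "inj_on (\<lambda>f i. if i < n then f i else 0) (PiE {..<n} (\<lambda>_. {..D}))"
proof (rule inj_onI)
  fix f g assume fg: "f \<in> PiE {..<n} (\<lambda>_. {..D})" "g \<in> PiE {..<n} (\<lambda>_. {..D})"
    "(\<lambda>i. if i < n then f i else 0) = (\<lambda>i. if i < n then g i else 0)"
  show "f = g"
  proof (rule PiE_ext[OF fg(1,2)])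
    fix i assume "i \<in> {..<n}"
    then show "f i = g i" using fun_cong[OF fg(3), of i] by simp
  qed
qed

lemma finite_exps: "finite (exps n D)"
  unfolding exps_image by (intro finite_imageI finite_PiE) auto

lemma card_exps: "card (exps n D) = (D + 1) ^ n"
  unfolding exps_image by (simp add: card_image[OF exps_inj] card_PiE)

lemma exps_add: "e \<in> exps n D1 \<Longrightarrow> e' \<in> exps n D2 \<Longrightarrow> (\<lambda>i. e i + e' i) \<in> exps n (D1 + D2)"
  by (auto simp: exps_def add_mono)

lemma exps_mono: "D1 \<le> D2 \<Longrightarrow> exps n D1 \<subseteq> exps n D2"
  by (auto simp: exps_def)

text \<open>The counting inequality behind the transcendence degree bound.\<close>
lemma monomial_count:
  fixes K N d m :: nat
  assumes "K \<ge> 1" "N = d * K ^ m"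
  shows "(K * N + 1) ^ m * d < (N + 1) ^ Suc m"
proof -
  have "K * N + 1 \<le> K * (N + 1)" using assms(1) by simp
  then have "(K * N + 1) ^ m \<le> (K * (N + 1)) ^ m" by (rule power_mono) simp
  also have "(K * (N + 1)) ^ m = K ^ m * (N + 1) ^ m" by (rule power_mult_distrib)
  finally have "(K * N + 1) ^ m * d \<le> K ^ m * (N + 1) ^ m * d" by (rule mult_right_mono) simp
  also have "\<dots> = N * (N + 1) ^ m" using assms(2) by simp
  also have "\<dots> < (N + 1) * (N + 1) ^ m" by simp
  finally show ?thesis by simp
qed


subsection \<open>Polynomials over a finite-dimensional algebra and their fractions\<close>

locale poly_frame =
  fixes t :: "nat \<Rightarrow> complex" and m :: nat and B :: "complex set"
  assumes fB: "finite B" and B1: "1 \<in> qspan B"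
    and Bmul: "\<And>b b'. b \<in> B \<Longrightarrow> b' \<in> B \<Longrightarrow> b * b' \<in> qspan B"
begin

definition mon :: "(nat \<Rightarrow> nat) \<Rightarrow> complex" where
  "mon e = (\<Prod>i<m. t i ^ e i)"

definition mons :: "nat \<Rightarrow> complex set" where
  "mons D = (\<lambda>(e,b). mon e * b) ` (exps m D \<times> B)"

definition deg_le :: "nat \<Rightarrow> complex \<Rightarrow> bool" where
  "deg_le D y \<longleftrightarrow> y \<in> qspan (mons D)"

lemma finite_mons: "finite (mons D)"
  unfolding mons_def using finite_exps fB by auto

lemma card_mons: "card (mons D) \<le> (D + 1) ^ m * card B"
proof -
  have "card (mons D) \<le> card (exps m D \<times> B)"
    unfolding mons_def by (rule card_image_le) (use finite_exps fB in auto)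
  also have "\<dots> = (D + 1) ^ m * card B" by (simp add: card_cartesian_product card_exps)
  finally show ?thesis .
qed

lemma deg_le_mon: assumes "e \<in> exps m D" "y \<in> qspan B" shows "deg_le D (mon e * y)"
  unfolding deg_le_def
proof (rule qspan_mult[OF _ _ fB _ assms(2), of "{mon e}"])
  fix x b assume "x \<in> {mon e}" "b \<in> B"
  then have "x * b \<in> mons D"
    using assms(1) unfolding mons_def by (auto intro: rev_image_eqI[of "(e,b)"])
  then show "x * b \<in> qspan (mons D)" using qspan_gen finite_mons by blast
qed (auto intro: qspan_gen)

lemma mon_add: "mon (\<lambda>i. e i + e' i) = mon e * mon e'"
  unfolding mon_def by (simp add: power_add prod.distrib)

lemma mon_0: "mon (\<lambda>_. 0) = 1" by (simp add: mon_def)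

lemma deg_le_add: "deg_le D x \<Longrightarrow> deg_le D y \<Longrightarrow> deg_le D (x + y)"
  and deg_le_neg: "deg_le D x \<Longrightarrow> deg_le D (- x)"
  and deg_le_0: "deg_le D 0"
  unfolding deg_le_def by (auto intro: qspan_add qspan_neg qspan_0)

lemma deg_le_mono: "D \<le> D' \<Longrightarrow> deg_le D x \<Longrightarrow> deg_le D' x"
proof -
  assume "D \<le> D'" "deg_le D x"
  have "mons D \<subseteq> mons D'"
    unfolding mons_def using exps_mono[OF \<open>D \<le> D'\<close>, of m] by (intro image_mono) auto
  then show ?thesis using \<open>deg_le D x\<close> qspan_mono[OF _ finite_mons] unfolding deg_le_def by blast
qed

lemma deg_le_mult: assumes "deg_le D1 x" "deg_le D2 y" shows "deg_le (D1 + D2) (x * y)"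
  unfolding deg_le_def
proof (rule qspan_mult[OF _ finite_mons finite_mons assms[unfolded deg_le_def]])
  fix u v assume "u \<in> mons D1" "v \<in> mons D2"
  then obtain e b e' b' where eb: "e \<in> exps m D1" "b \<in> B" "e' \<in> exps m D2" "b' \<in> B"
    "u = mon e * b" "v = mon e' * b'" unfolding mons_def by auto
  have "u * v = mon (\<lambda>i. e i + e' i) * (b * b')" by (simp add: eb mon_add algebra_simps)
  also have "deg_le (D1 + D2) \<dots>" by (rule deg_le_mon[OF exps_add[OF eb(1,3)] Bmul[OF eb(2,4)]])
  finally show "u * v \<in> qspan (mons (D1 + D2))" unfolding deg_le_def .
qed

lemma deg_le_const: "y \<in> qspan B \<Longrightarrow> deg_le 0 y"
  using deg_le_mon[of "\<lambda>_. 0" 0 y] by (simp add: mon_0 exps_def)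

lemma deg_le_1: "deg_le D 1"
  using deg_le_mono[OF _ deg_le_const[OF B1]] by simp

lemma deg_le_gen: assumes "i < m" shows "deg_le 1 (t i)"
proof -
  define e where "e = (\<lambda>j. if j = i then 1 else (0::nat))"
  have "e \<in> exps m 1" using assms by (auto simp: e_def exps_def)
  moreover have "mon e = t i"
  proof -
    have "mon e = (\<Prod>j<m. if j = i then t j else 1)"
      unfolding mon_def e_def by (intro prod.cong) auto
    also have "\<dots> = t i" using assms by simp
    finally show ?thesis .
  qed
  ultimately show ?thesis using deg_le_mon[of e 1 1] B1 by simp
qed

lemma deg_le_power: "deg_le D x \<Longrightarrow> deg_le (k * D) (x ^ k)"
proof (induction k)
  case 0 then show ?case using deg_le_1 by simp
next
  case (Suc k)
  then have "deg_le (D + k * D) (x * x ^ k)" by (intro deg_le_mult) auto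
  then show ?case by simp
qed

lemma deg_le_prod:
  "finite I \<Longrightarrow> (\<And>i. i \<in> I \<Longrightarrow> deg_le K (f i)) \<Longrightarrow> deg_le (card I * K) (\<Prod>i\<in>I. f i)"
proof (induction I rule: finite_induct)
  case empty then show ?case using deg_le_1 by simp
next
  case (insert a F)
  then have "deg_le (K + card F * K) (f a * prod f F)" by (intro deg_le_mult) auto
  then show ?case using insert by simp
qed

definition frac :: "complex set" where
  "frac = {y. \<exists>D p q. deg_le D p \<and> deg_le D q \<and> q \<noteq> 0 \<and> y = p / q}"

lemma frac_subfield: "is_subfield frac"
  unfolding is_subfield_def
proof (intro conjI ballI)
  show "0 \<in> frac" unfolding frac_def using deg_le_0[of 0] deg_le_1[of 0] by force
  show "1 \<in> frac" unfolding frac_def using deg_le_1[of 0] by force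
  fix x assume "x \<in> frac"
  then obtain D p q where x: "deg_le D p" "deg_le D q" "q \<noteq> 0" "x = p / q"
    unfolding frac_def by blast
  show "- x \<in> frac" unfolding frac_def using x deg_le_neg[OF x(1)]
    by (intro CollectI exI[of _ D] exI[of _ "-p"] exI[of _ q]) auto
  show "inverse x \<in> frac"
  proof (cases "p = 0")
    case True
    then show ?thesis unfolding frac_def using x deg_le_0[of 0] deg_le_1[of 0] by force
  next
    case False
    then show ?thesis unfolding frac_def using x
      by (intro CollectI exI[of _ D] exI[of _ q] exI[of _ p]) auto
  qed
  fix y assume "y \<in> frac"
  then obtain D' p' q' where y: "deg_le D' p'" "deg_le D' q'" "q' \<noteq> 0" "y = p' / q'"
    unfolding frac_def by blast
  have pq': "deg_le (D + D') (p * q')" "deg_le (D + D') (p' * q)" "deg_le (D + D') (q * q')"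
    using deg_le_mult[OF x(1) y(2)] deg_le_mult[OF y(1) x(2)] deg_le_mult[OF x(2) y(2)]
    by (auto simp: add.commute)
  show "x + y \<in> frac" unfolding frac_def
    using x y deg_le_add[OF pq'(1,2)] pq'(3)
    by (intro CollectI exI[of _ "D + D'"] exI[of _ "p * q' + p' * q"] exI[of _ "q * q'"]) (auto simp: field_simps)
  show "x * y \<in> frac" unfolding frac_def
    using x y deg_le_mult[OF x(1) y(1)] pq'(3)
    by (intro CollectI exI[of _ "D + D'"] exI[of _ "p * p'"] exI[of _ "q * q'"]) auto
qed

lemma frac_gen: "i < m \<Longrightarrow> t i \<in> frac"
  unfolding frac_def using deg_le_gen[of i] deg_le_1[of 1]
  by (intro CollectI exI[of _ 1] exI[of _ "t i"] exI[of _ 1]) auto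

lemma frac_const: "y \<in> qspan B \<Longrightarrow> y \<in> frac"
  unfolding frac_def using deg_le_const[of y] deg_le_1[of 0]
  by (intro CollectI exI[of _ 0] exI[of _ y] exI[of _ 1]) auto

lemma frac_common_degree:
  fixes n :: nat
  assumes "\<And>i. i < n \<Longrightarrow> x i \<in> frac"
  obtains E p q where
    "\<And>i. i < n \<Longrightarrow> deg_le E (p i) \<and> deg_le E (q i) \<and> q i \<noteq> 0 \<and> x i = p i / q i"
proof -
  have "\<forall>i<n. \<exists>D p q. deg_le D p \<and> deg_le D q \<and> q \<noteq> 0 \<and> x i = p / q"
    using assms unfolding frac_def by blast
  then obtain D p q where pq:
    "\<And>i. i < n \<Longrightarrow> deg_le (D i) (p i) \<and> deg_le (D i) (q i) \<and> q i \<noteq> 0 \<and> x i = p i / q i"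
    by metis
  have "D i \<le> (\<Sum>i<n. D i)" if "i < n" for i
    using that by (intro member_le_sum) auto
  then show ?thesis using pq deg_le_mono by (intro that[of "\<Sum>i<n. D i" p q]) blast
qed

lemma deg_le_cleared_monomial:
  assumes pq: "\<And>i. i < n \<Longrightarrow> deg_le E (p i) \<and> deg_le E (q i)" and e: "e \<in> exps n N"
  shows "deg_le (n * E * N) (\<Prod>i<n. p i ^ e i * q i ^ (N - e i))"
proof -
  have "deg_le (N * E) (p i ^ e i * q i ^ (N - e i))" if i: "i < n" for i
  proof -
    have "deg_le (e i * E + (N - e i) * E) (p i ^ e i * q i ^ (N - e i))"
      using pq[OF i] by (intro deg_le_mult deg_le_power) auto
    moreover have "e i * E + (N - e i) * E = N * E"
      using e i unfolding exps_def by (simp add: add_mult_distrib[symmetric])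
    ultimately show ?thesis by simp
  qed
  then have "deg_le (card {..<n} * (N * E)) (\<Prod>i<n. p i ^ e i * q i ^ (N - e i))"
    by (intro deg_le_prod) auto
  then show ?thesis by (simp add: mult_ac)
qed

text \<open>With n = m+1 and all
  exponents at most N = card B (n E)^m there are (N+1)^n monomials, but after clearing
  denominators they lie in a space of dimension less than that.\<close>
lemma frac_not_alg_indep:
  assumes x: "\<And>i. i < Suc m \<Longrightarrow> x i \<in> frac"
  shows "\<not> Q_alg_indep (Suc m) x"
proof
  assume ind: "Q_alg_indep (Suc m) x"
  define n where "n = Suc m"
  obtain E p q where pq: "\<And>i. i < n \<Longrightarrow> deg_le E (p i) \<and> deg_le E (q i) \<and> q i \<noteq> 0 \<and> x i = p i / q i"
    using frac_common_degree[of n x] x unfolding n_def by blast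
  define K where "K = n * Suc E"
  define N where "N = card B * K ^ m"
  define I where "I = exps n N"
  define v where "v e = (\<Prod>i<n. p i ^ e i * q i ^ (N - e i))" for e
  have v_deg: "v e \<in> qspan (mons (K * N))" if "e \<in> I" for e
  proof -
    have "deg_le (n * Suc E * N) (v e)" unfolding v_def
      using pq deg_le_mono[of E "Suc E"] \<open>e \<in> I\<close> unfolding I_def
      by (intro deg_le_cleared_monomial) auto
    then show ?thesis by (simp add: K_def deg_le_def)
  qed
  have "card (mons (K * N)) \<le> (K * N + 1) ^ m * card B" by (rule card_mons)
  also have "\<dots> < (N + 1) ^ Suc m" by (rule monomial_count) (simp_all add: K_def n_def N_def)
  also have "\<dots> = card I" by (simp add: I_def card_exps n_def)
  finally obtain g where g: "\<exists>e\<in>I. g e \<noteq> 0" "(\<Sum>e\<in>I. of_rat (g e) * v e) = 0"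
    using qspan_dependent[of I "mons (K * N)" v] v_deg finite_mons
    unfolding I_def by (auto simp: finite_exps)
  define Q where "Q = (\<Prod>i<n. q i ^ N)"
  have monomial: "(\<Prod>i<n. x i ^ e i) = v e / Q" if e: "e \<in> I" for e
  proof -
    have "x i ^ e i = (p i ^ e i * q i ^ (N - e i)) / q i ^ N" if i: "i < n" for i
    proof -
      have "q i ^ N = q i ^ e i * q i ^ (N - e i)"
        using e i by (simp add: I_def exps_def power_add[symmetric])
      then show ?thesis using pq[OF i] by (simp add: power_divide)
    qed
    then show ?thesis unfolding v_def Q_def by (simp add: prod_dividef)
  qed
  have "(\<Sum>e\<in>I. of_rat (g e) * (\<Prod>i<n. x i ^ e i)) = (\<Sum>e\<in>I. of_rat (g e) * v e) / Q"
    by (simp add: monomial sum_divide_distrib)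
  also have "\<dots> = 0" by (simp add: g(2))
  finally have "(\<Sum>e\<in>I. of_rat (g e) * (\<Prod>i<n. x i ^ e i)) = 0" .
  moreover have "finite I" "\<forall>e\<in>I. \<forall>i\<ge>n. e i = 0"
    by (simp_all add: I_def finite_exps) (simp add: exps_def)
  ultimately have "\<forall>e\<in>I. g e = 0" using ind unfolding Q_alg_indep_def n_def by blast
  with g(1) show False by blast
qed

end


subsection \<open>A transcendence degree bound and its consequences\<close>

lemma trdeg_upper_bound:
  assumes "finite A" "\<forall>a\<in>A. algebraic a" "S \<subseteq> gen_field (t ` {..<m} \<union> A)"
  shows "\<not> trdeg_ge S (Suc m)"
proof
  assume "trdeg_ge S (Suc m)"
  then obtain x where x: "\<And>i. i < Suc m \<Longrightarrow> x i \<in> gen_field S" "Q_alg_indep (Suc m) x"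
    unfolding trdeg_ge_def by blast
  obtain B where B: "finite B" "1 \<in> qspan B" "A \<subseteq> qspan B" "\<forall>b\<in>B. \<forall>b'\<in>B. b * b' \<in> qspan B"
    using algebraic_span_algebra[OF assms(1,2)] by blast
  interpret poly_frame t m B using B by unfold_locales auto
  have "t ` {..<m} \<union> A \<subseteq> frac" using frac_gen frac_const B(3) by auto
  then have "gen_field (t ` {..<m} \<union> A) \<subseteq> frac" by (rule gen_field_least[OF frac_subfield])
  then have "gen_field S \<subseteq> frac" using assms(3) by (intro gen_field_least[OF frac_subfield]) blast
  then show False using frac_not_alg_indep[of x] x by blast
qed

text \<open>A single element that is not algebraically independent is algebraic: the
  vanishing multivariate relation is really a nonzero univariate polynomial.\<close>
lemma algebraic_if_not_alg_indep_1:
  assumes "\<not> Q_alg_indep 1 (\<lambda>_. y)"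
  shows "algebraic y"
proof -
  have "\<exists>(M::(nat \<Rightarrow> nat) set) c. finite M \<and> (\<forall>m\<in>M. \<forall>i\<ge>1. m i = 0) \<and>
    (\<Sum>m\<in>M. of_rat (c m) * (\<Prod>i<1. y ^ m i)) = 0 \<and> (\<exists>m\<in>M. c m \<noteq> 0)"
    using assms unfolding Q_alg_indep_def by blast
  then obtain M :: "(nat \<Rightarrow> nat) set" and c where M: "finite M" "\<forall>m\<in>M. \<forall>i\<ge>1. m i = 0"
    "(\<Sum>m\<in>M. of_rat (c m) * y ^ m 0) = 0" "\<exists>m\<in>M. c m \<noteq> 0"
    by auto
  define P where "P = (\<Sum>m\<in>M. monom (of_rat (c m) :: complex) (m 0))"
  have coeffP: "coeff P k = (\<Sum>m\<in>M. if m 0 = k then of_rat (c m) else 0)" for k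
    unfolding P_def by (simp add: coeff_sum coeff_monom)
  have "poly P y = 0" unfolding P_def using M(3) by (simp add: poly_sum poly_monom)
  moreover have "P \<noteq> 0"
  proof -
    obtain m1 where m1: "m1 \<in> M" "c m1 \<noteq> 0" using M(4) by blast
    have determined: "m = m1" if "m \<in> M" "m 0 = m1 0" for m
    proof
      fix i show "m i = m1 i"
      proof (cases "i = 0")
        case False
        then show ?thesis using that(1) M(2) m1(1) by (metis less_one not_le)
      qed (use that in simp)
    qed
    have "coeff P (m1 0) = (\<Sum>m\<in>M. if m = m1 then of_rat (c m) else 0)"
      unfolding coeffP by (intro sum.cong) (auto dest: determined)
    also have "\<dots> = of_rat (c m1)" using M(1) m1(1) by simp
    finally show ?thesis using m1(2) by auto
  qed
  moreover have "coeff P i \<in> \<rat>" for i unfolding coeffP by (intro Rats_sum) auto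
  ultimately show ?thesis unfolding algebraic_altdef by blast
qed

text \<open>The case m = 0 of the bound: Q(A) consists of algebraic numbers.\<close>
lemma algebraic_in_gen_field:
  assumes "finite A" "\<forall>a\<in>A. algebraic a" "y \<in> gen_field A"
  shows "algebraic y"
proof (rule algebraic_if_not_alg_indep_1)
  have "\<not> trdeg_ge {y} (Suc 0)"
    by (rule trdeg_upper_bound[of A _ "\<lambda>_. 0" 0]) (use assms in auto)
  then show "\<not> Q_alg_indep 1 (\<lambda>_. y)"
    unfolding trdeg_ge_def by (auto simp: gen_field_gen)
qed

lemma schanuel_contradiction:
  assumes S: "Schanuel" and li: "Q_lin_indep (Suc m) a" and A: "finite A" "\<forall>x\<in>A. algebraic x"
    and G: "\<And>i. i < Suc m \<Longrightarrow> a i \<in> gen_field (t ` {..<m} \<union> A) \<and> exp (a i) \<in> gen_field (t ` {..<m} \<union> A)"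
  shows False
proof -
  have "trdeg_ge (a ` {..<Suc m} \<union> (\<lambda>i. exp (a i)) ` {..<Suc m}) (Suc m)"
    using S li unfolding Schanuel_def by blast
  moreover have "\<not> trdeg_ge (a ` {..<Suc m} \<union> (\<lambda>i. exp (a i)) ` {..<Suc m}) (Suc m)"
    by (rule trdeg_upper_bound[OF A]) (use G in auto)
  ultimately show False by blast
qed

lemma gen_field_gen_t: "i < m \<Longrightarrow> t i \<in> gen_field (t ` {..<m} \<union> A)"
  by (rule gen_field_gen) auto

lemma gen_field_gen_A: "a \<in> A \<Longrightarrow> a \<in> gen_field (t ` {..<m} \<union> A)"
  by (rule gen_field_gen) auto


lemma Q_lin_indep_2I:
  assumes "\<And>r0 r1. of_rat r0 * u + of_rat r1 * v = 0 \<Longrightarrow> r0 = 0 \<and> r1 = 0"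
  shows "Q_lin_indep 2 (\<lambda>i. [u, v] ! i)"
  unfolding Q_lin_indep_def
proof (rule allI, rule impI)
  fix c :: "nat \<Rightarrow> rat" assume "(\<Sum>i<2. of_rat (c i) * [u, v] ! i) = 0"
  then have "of_rat (c 0) * u + of_rat (c 1) * v = 0" by (simp add: numeral_2_eq_2)
  from assms[OF this] show "\<forall>i<2. c i = 0" by (auto simp: numeral_2_eq_2 less_Suc_eq)
qed

lemma Q_lin_indep_3I:
  assumes "\<And>r0 r1 r2. of_rat r0 * u + of_rat r1 * v + of_rat r2 * w = 0
    \<Longrightarrow> r0 = 0 \<and> r1 = 0 \<and> r2 = 0"
  shows "Q_lin_indep 3 (\<lambda>i. [u, v, w] ! i)"
  unfolding Q_lin_indep_def
proof (rule allI, rule impI)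
  fix c :: "nat \<Rightarrow> rat" assume "(\<Sum>i<3. of_rat (c i) * [u, v, w] ! i) = 0"
  then have "of_rat (c 0) * u + of_rat (c 1) * v + of_rat (c 2) * w = 0"
    by (simp add: eval_nat_numeral)
  from assms[OF this] show "\<forall>i<3. c i = 0" by (auto simp: eval_nat_numeral less_Suc_eq)
qed

lemma Q_lin_indep_4_iff:
  "Q_lin_indep 4 (\<lambda>i. [u, v, w, y] ! i) \<longleftrightarrow>
     (\<forall>r0 r1 r2 r3. of_rat r0 * u + of_rat r1 * v + of_rat r2 * w + of_rat r3 * y = 0
        \<longrightarrow> r0 = 0 \<and> r1 = 0 \<and> r2 = 0 \<and> r3 = 0)"
proof
  assume indep: "Q_lin_indep 4 (\<lambda>i. [u, v, w, y] ! i)"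
  show "\<forall>r0 r1 r2 r3. of_rat r0 * u + of_rat r1 * v + of_rat r2 * w + of_rat r3 * y = 0
        \<longrightarrow> r0 = 0 \<and> r1 = 0 \<and> r2 = 0 \<and> r3 = 0"
  proof (intro allI impI)
    fix r0 r1 r2 r3 assume "of_rat r0 * u + of_rat r1 * v + of_rat r2 * w + of_rat r3 * y = 0"
    then have "(\<Sum>i<4. of_rat ([r0, r1, r2, r3] ! i) * [u, v, w, y] ! i) = 0"
      by (simp add: eval_nat_numeral)
    then have zero: "\<forall>i<4. [r0, r1, r2, r3] ! i = 0"
      using indep unfolding Q_lin_indep_def by blast
    show "r0 = 0 \<and> r1 = 0 \<and> r2 = 0 \<and> r3 = 0"
      using zero[rule_format, of 0] zero[rule_format, of 1] zero[rule_format, of 2]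
        zero[rule_format, of 3] by simp
  qed
next
  assume rel: "\<forall>r0 r1 r2 r3. of_rat r0 * u + of_rat r1 * v + of_rat r2 * w + of_rat r3 * y = 0
        \<longrightarrow> r0 = 0 \<and> r1 = 0 \<and> r2 = 0 \<and> r3 = 0"
  show "Q_lin_indep 4 (\<lambda>i. [u, v, w, y] ! i)"
  proof (unfold Q_lin_indep_def, rule allI, rule impI)
    fix c :: "nat \<Rightarrow> rat" assume "(\<Sum>i<4. of_rat (c i) * [u, v, w, y] ! i) = 0"
    then have "of_rat (c 0) * u + of_rat (c 1) * v + of_rat (c 2) * w + of_rat (c 3) * y = 0"
      by (simp add: eval_nat_numeral)
    with rel show "\<forall>i<4. c i = 0" by (auto simp: eval_nat_numeral less_Suc_eq)
  qed
qed

lemma rat_lin_indep_1: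
  assumes "(x::complex) \<notin> \<rat>" "of_rat a + of_rat b * x = 0"
  shows "a = 0 \<and> b = 0"
proof (cases "b = 0")
  case True then show ?thesis using assms by simp
next
  case False
  then have "x = - of_rat a / of_rat b" using assms(2) by (simp add: field_simps eq_neg_iff_add_eq_0)
  also have "\<dots> \<in> \<rat>" by simp
  finally show ?thesis using assms(1) by blast
qed

lemma lin_indep_log_pair:
  fixes w l :: complex
  assumes "w \<notin> \<rat>" "l \<noteq> 0" "of_rat a * l + of_rat b * (w * l) = 0"
  shows "a = 0 \<and> b = 0"
proof -
  have "(of_rat a + of_rat b * w) * l = 0" using assms(3) by (simp add: algebra_simps)
  then have "of_rat a + of_rat b * w = 0" using assms(2) by simp
  then show ?thesis using rat_lin_indep_1[OF assms(1)] by blast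
qed

lemma lin_indep_extend:
  fixes l w v :: complex
  assumes pair: "\<And>a b. of_rat a * l + of_rat b * (w * l) = 0 \<Longrightarrow> a = 0 \<and> b = 0"
    and outside: "\<not> (\<exists>a b. v = of_rat a * l + of_rat b * (w * l))"
  shows "Q_lin_indep 3 (\<lambda>i. [l, w * l, v] ! i)"
proof (rule Q_lin_indep_3I)
  fix r0 r1 r2 assume rel: "of_rat r0 * l + of_rat r1 * (w * l) + of_rat r2 * v = 0"
  have "r2 = 0"
  proof (rule ccontr)
    assume "r2 \<noteq> 0"
    then have "v = of_rat (- r0 / r2) * l + of_rat (- r1 / r2) * (w * l)"
      using rel by (simp add: of_rat_divide of_rat_minus field_simps eq_neg_iff_add_eq_0)
    with outside show False by blast
  qed
  then show "r0 = 0 \<and> r1 = 0 \<and> r2 = 0" using pair rel by simp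
qed

lemma lin_indep_transcendental:
  fixes z w p q :: complex
  assumes "algebraic z" "\<not> algebraic w" "p \<in> gen_field {z}" "q \<in> gen_field {z}" "p + q * w = 0"
  shows "q = 0 \<and> p = 0"
proof (cases "q = 0")
  case True then show ?thesis using assms(5) by simp
next
  case False
  then have "w = - p / q" using assms(5) by (simp add: field_simps eq_neg_iff_add_eq_0)
  also have "\<dots> \<in> gen_field {z}" using assms(3,4) by (intro gen_field_divide gen_field_neg)
  finally have "algebraic w" using algebraic_in_gen_field[of "{z}" w] assms(1) by auto
  with assms(2) show ?thesis by blast
qed

lemma algebraic_from_power:
  fixes w :: complex
  assumes "algebraic (w ^ n)" "n > 0"
  shows "algebraic w"
proof (rule algebraic_root[OF assms(1), of "monom 1 n"])
  show "poly (monom 1 n) w = w ^ n" by (simp add: poly_monom)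
  show "\<forall>i. coeff (monom 1 n) i \<in> \<int>" by (simp add: coeff_monom)
  show "lead_coeff (monom (1::complex) n) = 1" by (simp add: degree_monom_eq)
  show "degree (monom (1::complex) n) > 0" using assms(2) by (simp add: degree_monom_eq)
qed


subsection \<open>The first assertion: algebraic powers z^w and w^z\<close>

text \<open>If z, w are algebraic, w irrational and z^w algebraic, then log z and w log z are
  independent yet lie in Q(log z, algebraic numbers): Schanuel is violated.\<close>
lemma both_algebraic_case:
  fixes z w lz :: complex
  assumes S: "Schanuel" and az: "algebraic z" and aw: "algebraic w" and wq: "w \<notin> \<rat>"
    and ez: "exp lz = z" and z1: "z \<noteq> 1" and aa: "algebraic (exp (w * lz))"
  shows False
proof -
  have lz0: "lz \<noteq> 0" using ez z1 by auto
  have li: "Q_lin_indep 2 (\<lambda>i. [lz, w * lz] ! i)"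
    by (rule Q_lin_indep_2I) (rule lin_indep_log_pair[OF wq lz0])
  define A where "A = {z, w, exp (w * lz)}"
  define t where "t = (\<lambda>i::nat. lz)"
  let ?G = "gen_field (t ` {..<1} \<union> A)"
  have m: "lz \<in> ?G" "z \<in> ?G" "w \<in> ?G" "exp (w * lz) \<in> ?G"
    using gen_field_gen_t[of 0 1 t A] gen_field_gen_A[of _ A t 1] by (auto simp: t_def A_def)
  show False
  proof (rule schanuel_contradiction[OF S _ _ _, of 1 "\<lambda>i. [lz, w * lz] ! i" A t])
    show "Q_lin_indep (Suc 1) (\<lambda>i. [lz, w * lz] ! i)" using li by (simp add: numeral_2_eq_2)
    show "finite A" "\<forall>x\<in>A. algebraic x" using az aw aa by (auto simp: A_def)
    fix i :: nat assume "i < Suc 1"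
    then have "i = 0 \<or> i = 1" by auto
    then show "[lz, w * lz] ! i \<in> ?G \<and> exp ([lz, w * lz] ! i) \<in> ?G"
      using m ez gen_field_mult[OF m(3) m(1)] by auto
  qed
qed

text \<open>If z = a/b is rational and w^z is algebraic, then w^a = (w^z)^b is algebraic,
  so w is algebraic (no Schanuel needed).\<close>
lemma rational_exponent_case:
  fixes z w lw :: complex
  assumes naw: "\<not> algebraic w" and zq: "z \<in> \<rat>" and z0: "z \<noteq> 0" and ew: "exp lw = w"
    and ab: "algebraic (exp (z * lw))"
  shows False
proof -
  obtain a b where ab': "b > 0" "z = of_int a / of_int b" using zq by (elim Rats_cases')
  have a0: "a \<noteq> 0" using z0 ab' by auto
  define nb where "nb = nat b"
  have nb: "(of_int b :: complex) = of_nat nb" using ab' by (simp add: nb_def)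
  have exponent_eq: "of_nat nb * (z * lw) = of_int a * lw" using ab' by (simp add: nb[symmetric])
  have beta_power: "exp (z * lw) ^ nb = exp (of_int a * lw)" by (simp add: exp_of_nat_mult[symmetric] exponent_eq)
  have algebraic_over_beta: "algebraic y" if "y \<in> gen_field {exp (z * lw)}" for y
    by (rule algebraic_in_gen_field[OF _ _ that]) (use ab in auto)
  show False
  proof (cases "a > 0")
    case True
    define na where "na = nat a"
    have "(of_int a :: complex) = of_nat na" using True by (simp add: na_def)
    then have "w ^ na = exp (z * lw) ^ nb" using beta_power ew by (simp add: exp_of_nat_mult)
    then have "algebraic (w ^ na)" using algebraic_over_beta gen_field_power gen_field_gen by (metis singletonI)
    then have "algebraic w" by (rule algebraic_from_power) (use True in \<open>simp add: na_def\<close>)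
    with naw show False by blast
  next
    case False
    define na where "na = nat (- a)"
    have "(of_int a :: complex) = - of_nat na" using False a0 by (simp add: na_def)
    then have "inverse (w ^ na) = exp (z * lw) ^ nb" using beta_power ew
      by (simp add: exp_minus exp_of_nat_mult)
    then have "w ^ na = inverse (exp (z * lw) ^ nb)" by (metis inverse_inverse_eq)
    then have "algebraic (w ^ na)" using algebraic_over_beta gen_field_power gen_field_gen gen_field_inverse by (metis singletonI)
    then have "algebraic w" by (rule algebraic_from_power) (use False a0 in \<open>simp add: na_def\<close>)
    with naw show False by blast
  qed
qed

text \<open>Irrational algebraic z, transcendental w, first subcase: if log z, w log z,
  log w, z log w are Q-linearly independent, the field they generate together with
  their exponentials lies in Q(log z, log w, w, algebraic numbers), of transcendence
  degree at most 3.\<close>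
lemma four_logs_independent_case:
  fixes z w lz lw :: complex
  assumes S: "Schanuel" and az: "algebraic z" and ez: "exp lz = z" and ew: "exp lw = w"
    and aa: "algebraic (exp (w * lz))" and ab: "algebraic (exp (z * lw))"
    and li: "Q_lin_indep 4 (\<lambda>i. [lz, w * lz, lw, z * lw] ! i)"
  shows False
proof -
  define A where "A = {z, exp (w * lz), exp (z * lw)}"
  define t where "t = (\<lambda>i. [lz, lw, w] ! i)"
  let ?G = "gen_field (t ` {..<3} \<union> A)"
  have m: "lz \<in> ?G" "lw \<in> ?G" "w \<in> ?G" "z \<in> ?G" "exp (w * lz) \<in> ?G" "exp (z * lw) \<in> ?G"
    using gen_field_gen_t[of 0 3 t A] gen_field_gen_t[of 1 3 t A] gen_field_gen_t[of 2 3 t A]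
      gen_field_gen_A[of _ A t 3]
    by (auto simp: t_def A_def)
  show False
  proof (rule schanuel_contradiction[OF S _ _ _, of 3 "\<lambda>i. [lz, w * lz, lw, z * lw] ! i" A t])
    show "Q_lin_indep (Suc 3) (\<lambda>i. [lz, w * lz, lw, z * lw] ! i)" using li by (simp add: eval_nat_numeral)
    show "finite A" "\<forall>x\<in>A. algebraic x" using az aa ab by (auto simp: A_def)
    fix i :: nat assume "i < Suc 3"
    then have "i = 0 \<or> i = 1 \<or> i = 2 \<or> i = 3" by auto
    then show "[lz, w * lz, lw, z * lw] ! i \<in> ?G \<and> exp ([lz, w * lz, lw, z * lw] ! i) \<in> ?G"
      using m ez ew gen_field_mult[OF m(3) m(1)] gen_field_mult[OF m(4) m(2)] by auto
  qed
qed

text \<open>Second subcase, Schanuel step: a number v outside the rational span of log z,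
  w log z such that v and exp v lie in Q(log z, w, algebraic numbers) is impossible,
  since log z, w log z, v would be independent with transcendence degree at most 2.\<close>
lemma log_outside_span_case:
  fixes z w lz v :: complex
  assumes S: "Schanuel" and A: "finite A" "\<forall>x\<in>A. algebraic x" "z \<in> A" "exp (w * lz) \<in> A"
    and ez: "exp lz = z" and wq: "w \<notin> \<rat>" and lz0: "lz \<noteq> 0"
    and v: "v \<in> gen_field ((\<lambda>i. [lz, w] ! i) ` {..<2} \<union> A)"
      "exp v \<in> gen_field ((\<lambda>i. [lz, w] ! i) ` {..<2} \<union> A)"
    and outside: "\<not> (\<exists>a b. v = of_rat a * lz + of_rat b * (w * lz))"
  shows False
proof -
  define t where "t = (\<lambda>i. [lz, w] ! i)"
  let ?G = "gen_field (t ` {..<2} \<union> A)"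
  have m: "lz \<in> ?G" "w \<in> ?G" "z \<in> ?G" "exp (w * lz) \<in> ?G"
    using gen_field_gen_t[of 0 2 t A] gen_field_gen_t[of 1 2 t A] gen_field_gen_A[of _ A t 2] A
    by (auto simp: t_def)
  have li: "Q_lin_indep 3 (\<lambda>i. [lz, w * lz, v] ! i)"
    using lin_indep_extend[OF lin_indep_log_pair[OF wq lz0] outside] .
  show False
  proof (rule schanuel_contradiction[OF S _ A(1,2), of 2 "\<lambda>i. [lz, w * lz, v] ! i" t])
    show "Q_lin_indep (Suc 2) (\<lambda>i. [lz, w * lz, v] ! i)" using li by (simp add: eval_nat_numeral)
    fix i :: nat assume "i < Suc 2"
    then have "i = 0 \<or> i = 1 \<or> i = 2" by auto
    then show "[lz, w * lz, v] ! i \<in> ?G \<and> exp ([lz, w * lz, v] ! i) \<in> ?G"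
      using m ez v gen_field_mult[OF m(2) m(1)] by (auto simp: t_def)
  qed
qed

text \<open>Second subcase, algebraic step: log w and z log w cannot both lie in the rational
  span of log z, w log z; otherwise comparing z times the first relation with the
  second gives a linear relation for w over Q(z), forcing z rational.\<close>
lemma logs_not_both_in_span:
  fixes z w lz lw :: complex
  assumes az: "algebraic z" and naw: "\<not> algebraic w" and zq: "z \<notin> \<rat>"
    and lz0: "lz \<noteq> 0" and lw0: "lw \<noteq> 0"
    and lw: "lw = of_rat a * lz + of_rat b * (w * lz)"
    and zlw: "z * lw = of_rat c * lz + of_rat d * (w * lz)"
  shows False
proof -
  have "((z * of_rat a - of_rat c) + (z * of_rat b - of_rat d) * w) * lz = 0"
    using lw zlw by (simp add: algebra_simps)
  then have rel: "(z * of_rat a - of_rat c) + (z * of_rat b - of_rat d) * w = 0" using lz0 by simp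
  have "z \<in> gen_field {z}" by (rule gen_field_gen) simp
  then have "z * of_rat b - of_rat d = 0 \<and> z * of_rat a - of_rat c = 0"
    by (intro lin_indep_transcendental[OF az naw _ _ rel] gen_field_diff gen_field_mult gen_field_of_rat)
  then have "of_rat (- d) + of_rat b * z = 0" "of_rat (- c) + of_rat a * z = 0"
    by (simp_all add: of_rat_minus algebra_simps)
  then have "b = 0" "a = 0" using rat_lin_indep_1[OF zq] by blast+
  then show False using lw lw0 by simp
qed

text \<open>Irrational algebraic z with transcendental w: a Q-linear relation among
  log z, w log z, log w, z log w puts log w (and z log w) into Q(log z, w, z); one of
  log w, z log w then escapes the span of log z, w log z.\<close>
lemma irrational_exponent_case:
  fixes z w lz lw :: complex
  assumes S: "Schanuel" and az: "algebraic z" and naw: "\<not> algebraic w" and zq: "z \<notin> \<rat>"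
    and ez: "exp lz = z" and ew: "exp lw = w" and z1: "z \<noteq> 1" and w1: "w \<noteq> 1"
    and aa: "algebraic (exp (w * lz))" and ab: "algebraic (exp (z * lw))"
  shows False
proof (cases "Q_lin_indep 4 (\<lambda>i. [lz, w * lz, lw, z * lw] ! i)")
  case True
  then show False using four_logs_independent_case[OF S az ez ew aa ab] by blast
next
  case False
  have lz0: "lz \<noteq> 0" and lw0: "lw \<noteq> 0" using ez z1 ew w1 by auto
  have wq: "w \<notin> \<rat>" using naw rat_imp_algebraic by blast
  obtain r0 r1 r2 r3 where
    "of_rat r0 * lz + of_rat r1 * (w * lz) + of_rat r2 * lw + of_rat r3 * (z * lw) = 0"
    and nontrivial: "\<not> (r0 = 0 \<and> r1 = 0 \<and> r2 = 0 \<and> r3 = 0)"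
    using False unfolding Q_lin_indep_4_iff by blast
  then have rel: "(of_rat r0 + of_rat r1 * w) * lz + (of_rat r2 + of_rat r3 * z) * lw = 0"
    by (simp add: algebra_simps)
  have denom: "of_rat r2 + of_rat r3 * z \<noteq> 0"
  proof
    assume "of_rat r2 + of_rat r3 * z = 0"
    then have "r2 = 0 \<and> r3 = 0" by (rule rat_lin_indep_1[OF zq])
    moreover then have "r0 = 0 \<and> r1 = 0"
      using rel lin_indep_log_pair[OF wq lz0, of r0 r1] by (simp add: algebra_simps)
    ultimately show False using nontrivial by blast
  qed
  define A where "A = {z, exp (w * lz), exp (z * lw)}"
  let ?G = "gen_field ((\<lambda>i. [lz, w] ! i) ` {..<2} \<union> A)"
  have m: "lz \<in> ?G" "w \<in> ?G" "z \<in> ?G" "exp (z * lw) \<in> ?G"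
    using gen_field_gen_t[of 0 2 "\<lambda>i. [lz, w] ! i" A] gen_field_gen_t[of 1 2 "\<lambda>i. [lz, w] ! i" A]
      gen_field_gen_A[of _ A _ 2]
    by (auto simp: A_def)
  have "lw = - (of_rat r0 + of_rat r1 * w) / (of_rat r2 + of_rat r3 * z) * lz"
    using rel denom by (simp add: field_simps eq_neg_iff_add_eq_0)
  also have "\<dots> \<in> ?G" using m
    by (intro gen_field_mult gen_field_divide gen_field_neg gen_field_add gen_field_of_rat) auto
  finally have lw_in: "lw \<in> ?G" .
  have A_alg: "finite A" "\<forall>x\<in>A. algebraic x" "z \<in> A" "exp (w * lz) \<in> A"
    using az aa ab by (auto simp: A_def)
  note outside = log_outside_span_case[OF S A_alg ez wq lz0]
  have "\<not> (\<exists>a b. lw = of_rat a * lz + of_rat b * (w * lz)) \<or>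
        \<not> (\<exists>a b. z * lw = of_rat a * lz + of_rat b * (w * lz))"
    using logs_not_both_in_span[OF az naw zq lz0 lw0] by blast
  then show False
  proof
    assume "\<not> (\<exists>a b. lw = of_rat a * lz + of_rat b * (w * lz))"
    then show False using outside[OF lw_in] ew m(2) by simp
  next
    assume "\<not> (\<exists>a b. z * lw = of_rat a * lz + of_rat b * (w * lz))"
    then show False using outside[OF gen_field_mult[OF m(3) lw_in] m(4)] by simp
  qed
qed

lemma one_algebraic_case:
  fixes z w lz lw :: complex
  assumes S: "Schanuel" and az: "algebraic z" and naw: "\<not> algebraic w"
    and z01: "z \<notin> {0, 1}" and w01: "w \<notin> {0, 1}" and ez: "exp lz = z" and ew: "exp lw = w"
    and aa: "algebraic (exp (w * lz))" and ab: "algebraic (exp (z * lw))"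
  shows False
proof (cases "z \<in> \<rat>")
  case True
  then show False using rational_exponent_case[OF naw True _ ew ab] z01 by simp
next
  case False
  then show False using irrational_exponent_case[OF S az naw False ez ew _ _ aa ab] z01 w01 by simp
qed

lemma schanuel_power_pair:
  fixes z w lz lw :: complex
  assumes S: "Schanuel" and z01: "z \<notin> {0, 1}" and w01: "w \<notin> {0, 1}"
    and ez: "exp lz = z" and ew: "exp lw = w"
    and aa: "algebraic (exp (w * lz))" and ab: "algebraic (exp (z * lw))"
  shows "(z \<in> \<rat> \<and> w \<in> \<rat>) \<or> (\<not> algebraic z \<and> \<not> algebraic w)"
proof -
  have "\<not> (algebraic z \<and> \<not> algebraic w)"
    using one_algebraic_case[OF S _ _ z01 w01 ez ew aa ab] by blast
  moreover have "\<not> (algebraic w \<and> \<not> algebraic z)"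
    using one_algebraic_case[OF S _ _ w01 z01 ew ez ab aa] by blast
  moreover have "w \<in> \<rat>" if "algebraic z" "algebraic w"
    using both_algebraic_case[OF S that _ ez _ aa] z01 by auto
  moreover have "z \<in> \<rat>" if "algebraic z" "algebraic w"
    using both_algebraic_case[OF S that(2,1) _ ew _ ab] w01 by auto
  ultimately show ?thesis by blast
qed


subsection \<open>The second assertion: real solutions of s^t = t^s\<close>

lemma rat_power_int:
  fixes s :: real
  assumes "s \<in> \<rat>" "s ^ c \<in> \<int>" "c > 0"
  shows "s \<in> \<int>"
proof -
  obtain a b where ab: "b > 0" "coprime a b" "s = of_int a / of_int b" using assms(1) by (elim Rats_cases')
  obtain N where N: "s ^ c = of_int N" using assms(2) by (elim Ints_cases)
  have "(of_int a / of_int b :: real) ^ c = of_int N" using N ab by simp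
  then have "(of_int (a ^ c) :: real) = of_int (N * b ^ c)" using ab(1) by (simp add: power_divide field_simps)
  then have eq: "a ^ c = N * b ^ c" by (simp only: of_int_eq_iff)
  have "b dvd b ^ c" using assms(3) by (simp add: dvd_power)
  also have "b ^ c dvd a ^ c" using eq by simp
  finally have "b dvd a ^ c" .
  moreover have "coprime (a ^ c) b" using ab(2) by (simp add: ac_simps)
  ultimately have "is_unit b" using coprime_absorb_right by blast
  then have "b = 1" using ab(1) by simp
  then show ?thesis using ab(3) by simp
qed

text \<open>s^t = t^s with s < t means ln s / s = ln t / t; the function ln x / x increases
  up to e and decreases afterwards, so s < e < t.\<close>
definition lnq :: "real \<Rightarrow> real" where
  "lnq x = ln x / x"

lemma lnq_deriv: "x > 0 \<Longrightarrow> DERIV lnq x :> (1 - ln x) / x^2"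
  unfolding lnq_def by (auto intro!: derivative_eq_intros simp: field_simps power2_eq_square)

lemma lnq_continuous: "0 < a \<Longrightarrow> continuous_on {a..b} lnq"
  unfolding lnq_def by (intro continuous_intros) auto

lemma lnq_increasing: assumes "0 < a" "a < b" "b \<le> exp 1" shows "lnq a < lnq b"
proof (rule DERIV_pos_imp_increasing_open[OF assms(2) _ lnq_continuous[OF assms(1)]])
  fix x assume x: "a < x" "x < b"
  then have x1: "x < exp 1" "x > 0" using assms by auto
  then have "ln x < 1" using ln_less_cancel_iff[of x "exp 1"] by simp
  then show "\<exists>y. DERIV lnq x :> y \<and> y > 0" using lnq_deriv[of x] x assms by (intro exI[of _ "(1 - ln x) / x^2"]) auto
qed

lemma lnq_decreasing: assumes "exp 1 \<le> a" "a < b" shows "lnq a > lnq b"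
proof (rule DERIV_neg_imp_decreasing_open[OF assms(2) _ lnq_continuous])
  show "0 < a" using assms(1) exp_gt_zero[of 1] by linarith
  fix x assume x: "a < x" "x < b"
  have x1: "x > exp 1" using x assms by simp
  have x0: "x > 0" using x1 exp_gt_zero[of 1] by linarith
  have "ln x > 1" using ln_less_cancel_iff[of "exp 1" x] x1 x0 by simp
  then show "\<exists>y. DERIV lnq x :> y \<and> y < 0"
    using lnq_deriv[of x] x0 by (intro exI[of _ "(1 - ln x) / x^2"]) (auto simp: divide_neg_pos)
qed

lemma powr_swap_lnq:
  fixes s t :: real
  assumes "1 < s" "s < t" "s powr t = t powr s"
  shows "lnq s = lnq t \<and> s < exp 1 \<and> exp 1 < t"
proof -
  have s0: "s > 0" "t > 0" using assms by auto
  have "ln (s powr t) = ln (t powr s)" using assms(3) by simp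
  then have "t * ln s = s * ln t" by simp
  then have eq: "lnq s = lnq t" unfolding lnq_def using s0 by (simp add: field_simps)
  moreover have "exp 1 < t"
    using lnq_increasing[OF s0(1) assms(2)] eq by (cases "exp 1 < t") auto
  moreover have "s < exp 1"
    using lnq_decreasing[OF _ assms(2)] eq by (cases "s < exp 1") auto
  ultimately show ?thesis by blast
qed

lemma lnq_inj_above_e:
  assumes "exp 1 \<le> a" "exp 1 \<le> b" "lnq a = lnq b"
  shows "a = b"
  using lnq_decreasing[OF assms(1), of b] lnq_decreasing[OF assms(2), of a] assms(3)
  by (cases a b rule: linorder_cases) auto

text \<open>The only solution of s^t = t^s with integral s and 1 < s < t is (2, 4):
  the integer s lies strictly between 1 and e, and lnq 2 = lnq 4.\<close>
lemma powr_swap_int: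
  fixes s t :: real
  assumes "1 < s" "s < t" "s powr t = t powr s" "s \<in> \<int>"
  shows "s = 2 \<and> t = 4"
proof -
  have swap: "lnq s = lnq t" "s < exp 1" "exp 1 < t" using powr_swap_lnq[OF assms(1-3)] by auto
  obtain k where k: "s = of_int k" using assms(4) by (elim Ints_cases)
  have "exp 1 \<le> (3::real)" by (rule exp_le)
  then have s2: "s = 2" using k assms(1) swap(2) by simp
  have "ln (4::real) = ln 2 + ln 2" using ln_mult[of "2::real" 2] by simp
  then have "lnq 4 = lnq 2" unfolding lnq_def by simp
  then have "lnq t = lnq 4" using swap(1) s2 by simp
  moreover have "exp 1 \<le> (4::real)" using \<open>exp 1 \<le> 3\<close> by simp
  ultimately have "t = 4" using lnq_inj_above_e swap(3) by auto
  with s2 show ?thesis by simp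
qed

text \<open>Under either hypothesis on r, s and t cannot both be rational: writing t = c/d,
  r^d = s^c, which is rational; this contradicts (ii), and under (i) the rational
  root theorem makes s an integer, so (s, t) = (2, 4) and r = 16.\<close>
lemma powr_swap_not_rational:
  fixes r s t :: real
  assumes st: "1 < s" "s < t" and r1: "s powr t = r" and r2: "t powr s = r"
    and cond: "(r \<in> \<nat> \<and> r \<noteq> 16) \<or> (\<forall>n::nat. n \<ge> 1 \<longrightarrow> algebraic (r ^ n) \<and> r ^ n \<notin> \<rat>)"
    and sq: "s \<in> \<rat>" and tq: "t \<in> \<rat>"
  shows False
proof -
  have s0: "s > 0" "t > 0" using st by auto
  obtain a b where ab: "b > 0" "t = of_int a / of_int b" using tq by (elim Rats_cases')
  have a0: "a > 0" using ab s0 by (simp add: zero_less_divide_iff)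
  define c where "c = nat a"
  define d where "d = nat b"
  have tdc: "t * real d = real c" using ab a0 by (simp add: c_def d_def)
  have cd: "d \<ge> 1" "c > 0" using ab a0 by (auto simp: c_def d_def)
  have "r ^ d = (s powr t) ^ d" using r1 by simp
  also have "\<dots> = (s powr t) powr (real d)" using s0 by (simp add: powr_realpow)
  also have "\<dots> = s powr (real c)" by (simp add: powr_powr tdc)
  also have "\<dots> = s ^ c" using s0 by (simp add: powr_realpow)
  finally have rs: "r ^ d = s ^ c" .
  have "s ^ c \<in> \<rat>" using sq by simp
  show False using cond
  proof
    assume "\<forall>n::nat. n \<ge> 1 \<longrightarrow> algebraic (r ^ n) \<and> r ^ n \<notin> \<rat>"
    then show False using cd rs \<open>s ^ c \<in> \<rat>\<close> by metis
  next
    assume r: "r \<in> \<nat> \<and> r \<noteq> 16"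
    then obtain k where k: "r = of_nat k" by (auto elim: Nats_cases)
    have "s ^ c \<in> \<int>" using rs k by (metis Ints_of_nat of_nat_power)
    then have "s \<in> \<int>" by (rule rat_power_int[OF sq _ cd(2)])
    then have "s = 2 \<and> t = 4" using powr_swap_int[OF st] r1 r2 by simp
    then have "r = 2 powr 4" using r1 by simp
    also have "\<dots> = 16" by (simp add: powr_numeral)
    finally show False using r by simp
  qed
qed

text \<open>The second assertion: apply the first one to z = s, w = t with the real
  logarithms; r = s^t = t^s is algebraic under either hypothesis.\<close>
lemma schanuel_powr_swap:
  fixes r s t :: real
  assumes S: "Schanuel" and st: "1 < s" "s < t" and r1: "s powr t = r" and r2: "t powr s = r"
    and cond: "(r \<in> \<nat> \<and> r \<noteq> 16) \<or> (\<forall>n::nat. n \<ge> 1 \<longrightarrow> algebraic (r ^ n) \<and> r ^ n \<notin> \<rat>)"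
  shows "\<not> algebraic s \<and> \<not> algebraic t"
proof -
  have s0: "s > 0" "t > 0" using st by auto
  have ar: "algebraic r" using cond
  proof
    assume "r \<in> \<nat> \<and> r \<noteq> 16" then show "algebraic r" by (auto elim: Nats_cases)
  next
    assume "\<forall>n::nat. n \<ge> 1 \<longrightarrow> algebraic (r ^ n) \<and> r ^ n \<notin> \<rat>"
    then show "algebraic r" by (metis power_one_right order_refl)
  qed
  have ez: "exp (complex_of_real (ln s)) = complex_of_real s"
    and ew: "exp (complex_of_real (ln t)) = complex_of_real t"
    using s0 by (simp_all add: exp_of_real)
  have "exp (complex_of_real t * complex_of_real (ln s)) = complex_of_real (exp (t * ln s))"
    by (simp add: exp_of_real[symmetric])
  also have "exp (t * ln s) = r" using r1 s0 by (simp add: powr_def)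
  finally have aa: "algebraic (exp (complex_of_real t * complex_of_real (ln s)))" using ar by simp
  have "exp (complex_of_real s * complex_of_real (ln t)) = complex_of_real (exp (s * ln t))"
    by (simp add: exp_of_real[symmetric])
  also have "exp (s * ln t) = r" using r2 s0 by (simp add: powr_def)
  finally have ab: "algebraic (exp (complex_of_real s * complex_of_real (ln t)))" using ar by simp
  have z01: "complex_of_real s \<notin> {0, 1}" "complex_of_real t \<notin> {0, 1}" using st by auto
  from schanuel_power_pair[OF S z01 ez ew aa ab]
  have "(s \<in> \<rat> \<and> t \<in> \<rat>) \<or> (\<not> algebraic s \<and> \<not> algebraic t)" by simp
  then show ?thesis using powr_swap_not_rational[OF st r1 r2 cond] by blast
qed


theorem mainTheorem1:
  assumes S: "Schanuel"
  shows
    "(\<forall>(z::complex) (w::complex) lz lw.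
        z \<notin> {0, 1} \<longrightarrow> w \<notin> {0, 1} \<longrightarrow> exp lz = z \<longrightarrow> exp lw = w \<longrightarrow>
        algebraic (exp (w * lz)) \<longrightarrow> algebraic (exp (z * lw)) \<longrightarrow>
        (z \<in> \<rat> \<and> w \<in> \<rat>) \<or> (\<not> algebraic z \<and> \<not> algebraic w))
     \<and>
     (\<forall>(r::real) (s::real) (t::real).
        1 < s \<longrightarrow> s < t \<longrightarrow> s powr t = r \<longrightarrow> t powr s = r \<longrightarrow>
        ((r \<in> \<nat> \<and> r \<noteq> 16) \<or> (\<forall>n::nat. n \<ge> 1 \<longrightarrow> algebraic (r ^ n) \<and> r ^ n \<notin> \<rat>)) \<longrightarrow>
        \<not> algebraic s \<and> \<not> algebraic t)"
  using schanuel_power_pair[OF S] schanuel_powr_swap[OF S] by blast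

end
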